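(* Let $q\ge2$, $r\ge2$, $t,s\ge0$ be integers, let $M=\sum_{i=1}^{t}A_{t-i,s}(r-1)+\sum_{i=1}^{s}A_{t,s-i}(r-1)+1$, and let $\mathbf{y}_1,\dots,\mathbf{y}_M$ be distinct sequences and $\mathbf{x}\in J_r^*$ a sequence with $\mathbf{y}_i\in\mathcal{B}_{t,s}(\mathbf{x})$ for all $i\in[M]$. Write $\phi(\mathbf{y}_i)=\mathbf{v}_i=(v_{i,1},\dots,v_{i,r})$ and $\phi(\mathbf{x})=\mathbf{u}=(u_1,\dots,u_r)$. For $j\in[r]$ let $a_j=\min_{i\in[M]}v_{i,j}$, $b_j=\max_{i\in[M]}v_{i,j}$, and for each integer $k$ let $c_{j,k}$ be the number of indices $i\in[M]$ with $v_{i,j}=k$ (so $\sum_{k=a_j}^{b_j}c_{j,k}=M$). Then for every $j\in[r]$: (1) $b_j-t\le u_j\le a_j+s$; (2) for every integer $k$ with $a_j\le k<u_j$, $c_{j,k}\le A_{t,\,s-u_j+k}(r-1)$; (3) for every integer $k$ with $u_j<k\le b_j$, $c_{j,k}\le A_{t-k+u_j,\,s}(r-1)$.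
   Context: $\Sigma_q=\{0,\dots,q-1\}$. Every finite string $\mathbf{x}$ over $\Sigma_q$ is uniquely $c_1^{u_1}\cdots c_r^{u_r}$ with $c_i\ne c_{i+1}$, $u_i\ge1$; $r$ is its number of runs, $J_r^*$ the set of strings with exactly $r$ runs, and $\phi(\mathbf{x})=(u_1,\dots,u_r)\in\mathbb{Z}_+^r$ its run-length vector. The sticky-insdel ball $\mathcal{B}_{t,s}(\mathbf{x})$ (strings obtainable by at most $t$ sticky insertions, i.e. duplications of a symbol within its run, and at most $s$ sticky deletions, i.e. deletions of a symbol from a run of length $\ge2$) is the set of strings $c_1^{v_1}\cdots c_r^{v_r}$ with $(v_1,\dots,v_r)\in\mathbb{Z}_+^r$, $\sum_i\max\{0,u_i-v_i\}\le s$ and $\sum_i\max\{0,v_i-u_i\}\le t$. The numbers $A_{t,s}(r)$ (integers $t,s$, $r\ge1$): $A_{t,s}(r)=0$ if $t<0$ or $s<0$; $A_{t,s}(1)=t+s+1$ for $t,s\ge0$; for $r\ge2$, $t,s\ge0$: $A_{t,s}(r)=\sum_{i=1}^{t}A_{t-i,s}(r-1)+\sum_{i=1}^{s}A_{t,s-i}(r-1)+A_{t,s}(r-1)$. *)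

theory Defs
  imports Main
begin

text \<open>Run-length decomposition: a string is c_1^{u_1}...c_r^{u_r} with c_i \<noteq> c_{i+1}, u_i \<ge> 1;
  runs x lists the pairs (c_i, u_i).\<close>
fun runs :: "'a list \<Rightarrow> ('a \<times> nat) list" where
  "runs [] = []"
| "runs (x # xs) = (case runs xs of
      [] \<Rightarrow> [(x, 1)]
    | (c, n) # rs \<Rightarrow> (if c = x then (c, Suc n) # rs else (x, 1) # (c, n) # rs))"

definition phi :: "'a list \<Rightarrow> nat list" where
  "phi x = map snd (runs x)"

definition run_syms :: "'a list \<Rightarrow> 'a list" where
  "run_syms x = map fst (runs x)"

definition Jstar :: "nat \<Rightarrow> nat \<Rightarrow> nat list set" where
  "Jstar q r = {x. set x \<subseteq> {..<q} \<and> length (runs x) = r}"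

definition sticky_ball :: "int \<Rightarrow> int \<Rightarrow> 'a list \<Rightarrow> 'a list set" where
  "sticky_ball t s x = {y. \<exists>v :: nat list.
      length v = length (runs x) \<and> (\<forall>i<length v. 1 \<le> v ! i) \<and>
      y = concat (map2 (\<lambda>c n. replicate n c) (run_syms x) v) \<and>
      (\<Sum>i<length v. max 0 (int (phi x ! i) - int (v ! i))) \<le> s \<and>
      (\<Sum>i<length v. max 0 (int (v ! i) - int (phi x ! i))) \<le> t}"

text \<open>A_{t,s}(r), with Arec n = A_{.,.}(n+1).\<close>
primrec Arec :: "nat \<Rightarrow> int \<Rightarrow> int \<Rightarrow> nat" where
  "Arec 0 t s = (if t < 0 \<or> s < 0 then 0 else nat (t + s + 1))"
| "Arec (Suc n) t s = (if t < 0 \<or> s < 0 then 0 else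
      (\<Sum>i\<in>{1..t}. Arec n (t - i) s) + (\<Sum>i\<in>{1..s}. Arec n t (s - i)) + Arec n t s)"

text \<open>A t s r = A_{t,s}(r), meaningful for r \<ge> 1.\<close>
definition A :: "int \<Rightarrow> int \<Rightarrow> nat \<Rightarrow> nat" where
  "A t s r = Arec (r - 1) t s"

end

theory Submission
  imports Defs
begin

text \<open>A string y in the sticky ball of x is determined by its displacement vector
  phi(y) - phi(x) in Z^r, whose positive parts sum to at most t and whose negative parts sum
  to at most s. Splitting off the first coordinate shows that A_{t,s}(n) counts such vectors of
  length n. If the j-th run of y has length k, the j-th coordinate is k - u_j, and deleting it
  leaves a vector of length r - 1 with budgets t - max(0, k - u_j) and s - max(0, u_j - k); this
  bounds c_{j,k}, and nonnegativity of the budgets gives (1).\<close>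

definition displacements :: "nat \<Rightarrow> int \<Rightarrow> int \<Rightarrow> int list set" where
  "displacements n t s =
     {d. length d = n \<and> (\<Sum>z\<leftarrow>d. max 0 z) \<le> t \<and> (\<Sum>z\<leftarrow>d. max 0 (- z)) \<le> s}"

lemma displacements_bounds_nonneg:
  assumes "d \<in> displacements n t s"
  shows "0 \<le> t" and "0 \<le> s"
proof -
  have "0 \<le> (\<Sum>z\<leftarrow>d. max 0 z)" "0 \<le> (\<Sum>z\<leftarrow>d. max 0 (- z :: int))"
    by (intro sum_list_nonneg; auto)+
  then show "0 \<le> t" "0 \<le> s"
    using assms unfolding displacements_def by auto
qed

lemma Cons_in_displacements_iff:
  "z # d \<in> displacements (Suc n) t s \<longleftrightarrow> d \<in> displacements n (t - max 0 z) (s - max 0 (- z))"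
  by (auto simp: displacements_def)

lemma displacements_0: "displacements 0 t s = (if 0 \<le> t \<and> 0 \<le> s then {[]} else {})"
  by (auto simp: displacements_def)

lemma displacements_Suc:
  "displacements (Suc n) t s =
     (\<Union>z\<in>{-s..t}. (#) z ` displacements n (t - max 0 z) (s - max 0 (- z)))"
proof (intro equalityI subsetI)
  fix d assume d: "d \<in> displacements (Suc n) t s"
  then obtain z d' where d_eq: "d = z # d'"
    by (cases d) (auto simp: displacements_def)
  with d have d': "d' \<in> displacements n (t - max 0 z) (s - max 0 (- z))"
    by (simp add: Cons_in_displacements_iff)
  then have "z \<in> {-s..t}"
    using displacements_bounds_nonneg[OF d'] by auto
  with d' show "d \<in> (\<Union>z\<in>{-s..t}. (#) z ` displacements n (t - max 0 z) (s - max 0 (- z)))"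
    unfolding d_eq by blast
qed (auto simp: Cons_in_displacements_iff)

lemma finite_displacements: "finite (displacements n t s)"
  by (induction n arbitrary: t s) (simp_all add: displacements_0 displacements_Suc)

lemma card_displacements_Suc:
  "card (displacements (Suc n) t s) =
     (\<Sum>z\<in>{-s..t}. card (displacements n (t - max 0 z) (s - max 0 (- z))))"
  unfolding displacements_Suc
  by (subst card_UN_disjoint) (auto simp: finite_displacements card_image)

lemma sum_split_sign:
  fixes f :: "int \<Rightarrow> int \<Rightarrow> 'a :: comm_monoid_add"
  assumes "0 \<le> t" "0 \<le> s"
  shows "(\<Sum>z\<in>{-s..t}. f (t - max 0 z) (s - max 0 (- z))) =
     (\<Sum>i\<in>{1..t}. f (t - i) s) + (\<Sum>i\<in>{1..s}. f t (s - i)) + f t s"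
proof -
  let ?g = "\<lambda>z. f (t - max 0 z) (s - max 0 (- z))"
  have split: "{-s..t} = {1..t} \<union> uminus ` {1..s} \<union> {0}"
  proof (intro set_eqI iffI)
    fix z assume "z \<in> {-s..t}"
    then show "z \<in> {1..t} \<union> uminus ` {1..s} \<union> {0}"
      by (cases "0 < z"; cases "z = 0") (auto intro!: image_eqI[of _ uminus "- z"])
  qed (use assms in auto)
  have "(\<Sum>z\<in>{-s..t}. ?g z) = (\<Sum>z\<in>{1..t}. ?g z) + (\<Sum>z\<in>uminus ` {1..s}. ?g z) + ?g 0"
    unfolding split by (subst sum.union_disjoint; auto)+
  also have "(\<Sum>z\<in>{1..t}. ?g z) = (\<Sum>i\<in>{1..t}. f (t - i) s)"
    by (rule sum.cong) auto
  also have "(\<Sum>z\<in>uminus ` {1..s}. ?g z) = (\<Sum>i\<in>{1..s}. f t (s - i))"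
    by (subst sum.reindex) (auto intro: sum.cong)
  finally show ?thesis by simp
qed

lemma displacements_eq_empty: "t < 0 \<or> s < 0 \<Longrightarrow> displacements n t s = {}"
  using displacements_bounds_nonneg by fastforce

lemma card_displacements_Suc_eq_Arec: "card (displacements (Suc n) t s) = Arec n t s"
proof (induction n arbitrary: t s)
  case 0
  show ?case
    by (cases "t < 0 \<or> s < 0")
      (simp_all add: displacements_eq_empty card_displacements_Suc displacements_0)
next
  case (Suc n)
  show ?case
  proof (cases "t < 0 \<or> s < 0")
    case True
    then show ?thesis by (simp add: displacements_eq_empty)
  next
    case False
    have "card (displacements (Suc (Suc n)) t s) =
        (\<Sum>z\<in>{-s..t}. Arec n (t - max 0 z) (s - max 0 (- z)))"
      by (simp only: card_displacements_Suc[of "Suc n"] Suc.IH)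
    also have "\<dots> = (\<Sum>i\<in>{1..t}. Arec n (t - i) s) + (\<Sum>i\<in>{1..s}. Arec n t (s - i)) + Arec n t s"
      using False by (intro sum_split_sign) auto
    finally show ?thesis
      using False by simp
  qed
qed

lemma card_displacements_eq_A: "0 < n \<Longrightarrow> card (displacements n t s) = A t s n"
  using card_displacements_Suc_eq_Arec[of "n - 1"] by (simp add: A_def)

lemma take_drop_Suc_in_displacements:
  assumes "d \<in> displacements (Suc n) t s" and "j \<le> n"
  shows "take j d @ drop (Suc j) d \<in> displacements n (t - max 0 (d ! j)) (s - max 0 (- (d ! j)))"
proof -
  have "j < length d"
    using assms by (simp add: displacements_def)
  then obtain xs z ys where d: "d = xs @ z # ys" and xs: "length xs = j"
    using id_take_nth_drop by (metis length_take min_absorb2 less_imp_le)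
  show ?thesis
    using assms(1) unfolding d xs[symmetric] displacements_def by simp
qed

lemma nth_displacements_bounds:
  assumes "d \<in> displacements n t s" and "j < n"
  shows "d ! j \<le> t" and "- (d ! j) \<le> s"
proof -
  obtain m where "n = Suc m" "j \<le> m"
    using assms(2) by (cases n) auto
  with take_drop_Suc_in_displacements assms(1)
  have "take j d @ drop (Suc j) d \<in> displacements m (t - max 0 (d ! j)) (s - max 0 (- (d ! j)))"
    by blast
  from displacements_bounds_nonneg[OF this] show "d ! j \<le> t" "- (d ! j) \<le> s"
    by auto
qed

lemma card_displacements_with_nth_le:
  assumes "j \<le> n"
  shows "card {d \<in> displacements (Suc n) t s. d ! j = z}
    \<le> card (displacements n (t - max 0 z) (s - max 0 (- z)))"
proof (rule card_inj_on_le)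
  let ?remove = "\<lambda>d :: int list. take j d @ drop (Suc j) d"
  show "inj_on ?remove {d \<in> displacements (Suc n) t s. d ! j = z}"
  proof (rule inj_onI)
    fix d d' assume d: "d \<in> {d \<in> displacements (Suc n) t s. d ! j = z}"
      and d': "d' \<in> {d \<in> displacements (Suc n) t s. d ! j = z}"
      and eq: "?remove d = ?remove d'"
    have "j < length d" "j < length d'"
      using d d' assms by (auto simp: displacements_def)
    then have "d = take j d @ z # drop (Suc j) d" "d' = take j d' @ z # drop (Suc j) d'"
      using d d' id_take_nth_drop by fastforce+
    moreover have "take j d = take j d'" "drop (Suc j) d = drop (Suc j) d'"
      using eq \<open>j < length d\<close> \<open>j < length d'\<close> by simp_all
    ultimately show "d = d'" by metis
  qed
  show "?remove ` {d \<in> displacements (Suc n) t s. d ! j = z}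
      \<subseteq> displacements n (t - max 0 z) (s - max 0 (- z))"
    using take_drop_Suc_in_displacements[OF _ assms] by blast
qed (rule finite_displacements)

lemma successively_runs: "successively (\<lambda>a b. fst a \<noteq> fst b) (runs x)"
  by (induction x) (auto split: list.splits simp: successively_Cons)

lemma runs_replicate_append:
  assumes "1 \<le> n" and "runs rest \<noteq> [] \<longrightarrow> fst (hd (runs rest)) \<noteq> c"
  shows "runs (replicate n c @ rest) = (c, n) # runs rest"
  using assms
proof (induction n rule: dec_induct)
  case base
  then show ?case by (auto split: list.splits)
qed simp

lemma runs_concat_replicate:
  assumes "successively (\<noteq>) cs" and "length cs = length v" and "\<forall>n\<in>set v. 1 \<le> n"
  shows "runs (concat (map2 (\<lambda>c n. replicate n c) cs v)) = zip cs v"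
  using assms
proof (induction cs arbitrary: v)
  case (Cons c cs)
  then obtain n v' where v: "v = n # v'"
    by (cases v) auto
  have IH: "runs (concat (map2 (\<lambda>c n. replicate n c) cs v')) = zip cs v'"
    using Cons by (auto simp: v successively_Cons)
  show ?case
    using Cons.prems IH unfolding v
    by simp (subst runs_replicate_append; auto simp: successively_Cons neq_Nil_conv)
qed simp

lemma length_phi: "length (phi x) = length (runs x)"
  by (simp add: phi_def)

lemma sticky_ball_phi:
  assumes "y \<in> sticky_ball t s x"
  shows "length (phi y) = length (runs x)"
    and "y = concat (map2 (\<lambda>c n. replicate n c) (run_syms x) (phi y))"
    and "(\<Sum>i<length (runs x). max 0 (int (phi x ! i) - int (phi y ! i))) \<le> s"
    and "(\<Sum>i<length (runs x). max 0 (int (phi y ! i) - int (phi x ! i))) \<le> t"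
proof -
  obtain v where v: "length v = length (runs x)" "\<forall>i<length v. 1 \<le> v ! i"
     "y = concat (map2 (\<lambda>c n. replicate n c) (run_syms x) v)"
     "(\<Sum>i<length v. max 0 (int (phi x ! i) - int (v ! i))) \<le> s"
     "(\<Sum>i<length v. max 0 (int (v ! i) - int (phi x ! i))) \<le> t"
    using assms unfolding sticky_ball_def by blast
  have "successively (\<noteq>) (run_syms x)"
    using successively_runs[of x] by (simp add: run_syms_def successively_map)
  then have "runs y = zip (run_syms x) v"
    using v by (auto simp: run_syms_def in_set_conv_nth intro!: runs_concat_replicate)
  then have "phi y = v"
    using v(1) by (simp add: phi_def run_syms_def)
  with v show "length (phi y) = length (runs x)"
    "y = concat (map2 (\<lambda>c n. replicate n c) (run_syms x) (phi y))"
    "(\<Sum>i<length (runs x). max 0 (int (phi x ! i) - int (phi y ! i))) \<le> s"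
    "(\<Sum>i<length (runs x). max 0 (int (phi y ! i) - int (phi x ! i))) \<le> t"
    by auto
qed

definition run_displacement :: "'a list \<Rightarrow> 'a list \<Rightarrow> int list" where
  "run_displacement x y = map2 (\<lambda>m n. int m - int n) (phi y) (phi x)"

lemma nth_run_displacement:
  assumes "i < length (runs x)" and "y \<in> sticky_ball t s x"
  shows "run_displacement x y ! i = int (phi y ! i) - int (phi x ! i)"
  using assms sticky_ball_phi(1)[OF assms(2)] length_phi[of x]
  by (simp add: run_displacement_def)

lemma run_displacement_in_displacements:
  assumes "y \<in> sticky_ball t s x"
  shows "run_displacement x y \<in> displacements (length (runs x)) t s"
proof -
  let ?d = "run_displacement x y"
  have len: "length ?d = length (runs x)"
    using sticky_ball_phi(1)[OF assms] length_phi[of x] by (simp add: run_displacement_def)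
  have sum_d: "(\<Sum>z\<leftarrow>?d. f z) = (\<Sum>i<length (runs x). f (int (phi y ! i) - int (phi x ! i)))"
    for f :: "int \<Rightarrow> int"
    using sum_list_sum_nth[of "map f ?d"] assms
    by (simp add: len atLeast0LessThan nth_run_displacement)
  show ?thesis
    using sticky_ball_phi(3,4)[OF assms] unfolding displacements_def
    by (simp add: len sum_d)
qed

lemma inj_on_run_displacement: "inj_on (run_displacement x) (sticky_ball t s x)"
proof (rule inj_onI)
  fix y y' assume y: "y \<in> sticky_ball t s x" and y': "y' \<in> sticky_ball t s x"
    and eq: "run_displacement x y = run_displacement x y'"
  have "phi y = phi y'"
  proof (rule nth_equalityI)
    show "length (phi y) = length (phi y')"
      using y y' by (simp add: sticky_ball_phi(1))
    fix i assume "i < length (phi y)"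
    then have "i < length (runs x)"
      using y by (simp add: sticky_ball_phi(1))
    then have "int (phi y ! i) - int (phi x ! i) = int (phi y' ! i) - int (phi x ! i)"
      using eq y y' by (metis nth_run_displacement)
    then show "phi y ! i = phi y' ! i"
      by simp
  qed
  then show "y = y'"
    using sticky_ball_phi(2) y y' by metis
qed

lemma sticky_ball_run_length_bounds:
  assumes "y \<in> sticky_ball t s x" and "j < length (runs x)"
  shows "int (phi y ! j) - int (phi x ! j) \<le> t" and "int (phi x ! j) - int (phi y ! j) \<le> s"
  using nth_displacements_bounds[OF run_displacement_in_displacements[OF assms(1)] assms(2)]
    nth_run_displacement[OF assms(2,1)]
  by simp_all

lemma card_sticky_ball_run_length_le:
  assumes "inj_on ys I" and "\<forall>i\<in>I. ys i \<in> sticky_ball t s x" and "j < length (runs x)"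
  shows "card {i \<in> I. int (phi (ys i) ! j) = k}
    \<le> card (displacements (length (runs x) - 1)
          (t - max 0 (k - int (phi x ! j))) (s - max 0 (int (phi x ! j) - k)))"
proof -
  let ?u = "int (phi x ! j)" and ?n = "length (runs x) - 1"
  let ?I = "{i \<in> I. int (phi (ys i) ! j) = k}"
  have n: "length (runs x) = Suc ?n"
    using assms(3) by simp
  have "ys ` ?I \<subseteq> sticky_ball t s x"
    using assms(2) by blast
  then have "inj_on (run_displacement x \<circ> ys) ?I"
    using inj_on_subset[OF assms(1)] inj_on_subset[OF inj_on_run_displacement]
    by (intro comp_inj_on) auto
  then have "card ?I = card ((run_displacement x \<circ> ys) ` ?I)"
    by (rule card_image[symmetric])
  also have "\<dots> \<le> card {d \<in> displacements (Suc ?n) t s. d ! j = k - ?u}"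
  proof (intro card_mono image_subsetI)
    fix i assume i: "i \<in> ?I"
    then have "ys i \<in> sticky_ball t s x"
      using assms(2) by blast
    with i show "(run_displacement x \<circ> ys) i \<in> {d \<in> displacements (Suc ?n) t s. d ! j = k - ?u}"
      using run_displacement_in_displacements nth_run_displacement[OF assms(3)] n by fastforce
  qed (simp add: finite_displacements)
  also have "\<dots> \<le> card (displacements ?n (t - max 0 (k - ?u)) (s - max 0 (?u - k)))"
    using card_displacements_with_nth_le[of j ?n t s "k - ?u"] assms(3) by simp
  finally show ?thesis .
qed

lemma sticky_ball_run_lengths:
  assumes "inj_on ys I" and "finite I" and "I \<noteq> {}"
    and "\<forall>i\<in>I. ys i \<in> sticky_ball t s x" and "j < length (runs x)"
  defines "u \<equiv> int (phi x ! j)" and "v \<equiv> \<lambda>i. int (phi (ys i) ! j)"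
  shows "Max (v ` I) - t \<le> u" and "u \<le> Min (v ` I) + s"
    and "k < u \<Longrightarrow> card {i \<in> I. v i = k} \<le> card (displacements (length (runs x) - 1) t (s - u + k))"
    and "u < k \<Longrightarrow> card {i \<in> I. v i = k} \<le> card (displacements (length (runs x) - 1) (t - k + u) s)"
proof -
  have bounds: "v i - u \<le> t" "u - v i \<le> s" if "i \<in> I" for i
    using sticky_ball_run_length_bounds[OF _ assms(5)] assms(4) that unfolding u_def v_def by blast+
  have "finite (v ` I)" "v ` I \<noteq> {}"
    using assms(2,3) by auto
  then show "Max (v ` I) - t \<le> u" "u \<le> Min (v ` I) + s"
    using Max_in Min_in bounds by fastforce+
  have count: "card {i \<in> I. v i = k}
      \<le> card (displacements (length (runs x) - 1) (t - max 0 (k - u)) (s - max 0 (u - k)))"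
    using card_sticky_ball_run_length_le[OF assms(1,4,5)] unfolding u_def v_def .
  show "card {i \<in> I. v i = k} \<le> card (displacements (length (runs x) - 1) t (s - u + k))"
    if "k < u"
    using count that by (simp add: max_def algebra_simps)
  show "card {i \<in> I. v i = k} \<le> card (displacements (length (runs x) - 1) (t - k + u) s)"
    if "u < k"
    using count that by (simp add: max_def algebra_simps)
qed

theorem lemma3:
  fixes q r :: nat and t s :: int and M :: nat
    and x :: "nat list" and ys :: "nat \<Rightarrow> nat list"
  assumes "q \<ge> 2" and "r \<ge> 2" and "t \<ge> 0" and "s \<ge> 0"
    and M_def: "M = (\<Sum>i\<in>{1..t}. A (t - i) s (r - 1)) + (\<Sum>i\<in>{1..s}. A t (s - i) (r - 1)) + 1"
    and distinct: "inj_on ys {1..M}"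
    and x_J: "x \<in> Jstar q r"
    and in_ball: "\<forall>i\<in>{1..M}. ys i \<in> sticky_ball t s x"
  shows "\<forall>j\<in>{1..r}.
     (let u = int (phi x ! (j - 1));
          v = (\<lambda>i. int (phi (ys i) ! (j - 1)));
          a = Min (v ` {1..M});
          b = Max (v ` {1..M});
          c = (\<lambda>k. card {i\<in>{1..M}. v i = k})
      in b - t \<le> u \<and> u \<le> a + s
         \<and> (\<forall>k. a \<le> k \<and> k < u \<longrightarrow> c k \<le> A t (s - u + k) (r - 1))
         \<and> (\<forall>k. u < k \<and> k \<le> b \<longrightarrow> c k \<le> A (t - k + u) s (r - 1)))"
proof
  fix j assume "j \<in> {1..r}"
  moreover have r: "length (runs x) = r"
    using x_J by (simp add: Jstar_def)
  ultimately have j: "j - 1 < length (runs x)"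
    by auto
  \<comment> \<open>Of the value of M only M \<ge> 1 is needed.\<close>
  have I: "finite {1..M}" "{1..M} \<noteq> {}"
    using M_def by auto
  have A_eq: "A a b (r - 1) = card (displacements (length (runs x) - 1) a b)" for a b
    using card_displacements_eq_A[of "r - 1"] \<open>r \<ge> 2\<close> r by simp
  show "let u = int (phi x ! (j - 1));
          v = (\<lambda>i. int (phi (ys i) ! (j - 1)));
          a = Min (v ` {1..M});
          b = Max (v ` {1..M});
          c = (\<lambda>k. card {i\<in>{1..M}. v i = k})
      in b - t \<le> u \<and> u \<le> a + s
         \<and> (\<forall>k. a \<le> k \<and> k < u \<longrightarrow> c k \<le> A t (s - u + k) (r - 1))
         \<and> (\<forall>k. u < k \<and> k \<le> b \<longrightarrow> c k \<le> A (t - k + u) s (r - 1))"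
    using sticky_ball_run_lengths[OF distinct I in_ball j] unfolding Let_def A_eq by blast
qed

end
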